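(* Let $q>0$. The set $L(q)$ contains a loop of length $1$ if and only if $q=1/b$ for some positive integer $b$. In that case the weight $w_q$ is not unique unless $q=1$.
   Context: For $q>0$, $k\ge0$ and $\mathbf m=(m_0,\dots,m_k)\in\mathbb Z^{k+1}$ put $\mathbf m_j=(m_0,\dots,m_j)$; define $c(q,\mathbf m_0)=m_0$ and $c(q,\mathbf m_j)=m_j+\frac{1}{q\,c(q,\mathbf m_{j-1})}$ for $1\le j\le k$. $\mathbf m$ is a path for $q$ of length $k$ if $c(q,\mathbf m_j)\ne0$ for $0\le j\le k-1$. The weight is $w_q(\mathbf m)=q^{k/2}\prod_{j=0}^{k-1}|c(q,\mathbf m_j)|$ (and $1$ if $k=0$). A loop is a path with $c(q,\mathbf m)=0$; $L(q)$ is the set of loops for $q$. The weight $w_q$ is unique if $w_q(\mathbf m)=w_q(\mathbf n)$ for all paths $\mathbf m,\mathbf n$ for $q$ with $c(q,\mathbf m)=c(q,\mathbf n)$. *)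

theory Defs
  imports Complex_Main
begin

text \<open>A vector m = (m_0,...,m_k) is represented as a nonempty list of integers
  of length k+1. cval q m j is c(q, m_j), the value on the prefix (m_0,...,m_j).\<close>

fun cval :: "real \<Rightarrow> int list \<Rightarrow> nat \<Rightarrow> real" where
  "cval q m 0 = of_int (m ! 0)"
| "cval q m (Suc j) = of_int (m ! Suc j) + 1 / (q * cval q m j)"

definition plen :: "int list \<Rightarrow> nat" where
  "plen m = length m - 1"

definition cfull :: "real \<Rightarrow> int list \<Rightarrow> real" where
  "cfull q m = cval q m (plen m)"

definition is_path :: "real \<Rightarrow> int list \<Rightarrow> bool" where
  "is_path q m \<longleftrightarrow> m \<noteq> [] \<and> (\<forall>j < plen m. cval q m j \<noteq> 0)"

definition weight :: "real \<Rightarrow> int list \<Rightarrow> real" where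
  "weight q m = q powr (real (plen m) / 2) * (\<Prod>j<plen m. \<bar>cval q m j\<bar>)"

definition loops :: "real \<Rightarrow> int list set" where
  "loops q = {m. is_path q m \<and> cfull q m = 0}"

definition weight_unique :: "real \<Rightarrow> bool" where
  "weight_unique q \<longleftrightarrow>
     (\<forall>m n. is_path q m \<and> is_path q n \<and> cfull q m = cfull q n \<longrightarrow> weight q m = weight q n)"

end

theory Submission
  imports Defs
begin

text \<open>A loop [a, c] of length one is an integer factorisation q a c = -1; it exists exactly
  when 1/q is a positive integer b. For such q both [1, -b] and [b, -1] are loops, of weights
  sqrt q and b sqrt q, so the weight is not unique once b > 1.\<close>

lemma plen_eq_1_iff: "plen m = 1 \<longleftrightarrow> (\<exists>a c. m = [a, c])"
  unfolding plen_def by (cases m; cases "tl m"; auto simp: length_Suc_conv)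

lemma is_path_two: "is_path q [a, c] \<longleftrightarrow> a \<noteq> 0"
  by (simp add: is_path_def plen_def)

lemma cfull_two: "cfull q [a, c] = of_int c + 1 / (q * of_int a)"
  by (simp add: cfull_def plen_def numeral_2_eq_2)

lemma in_loops_two_iff:
  assumes "q \<noteq> 0"
  shows "[a, c] \<in> loops q \<longleftrightarrow> a \<noteq> 0 \<and> q * of_int (a * c) = -1"
proof (cases "a = 0")
  case False
  with assms have "of_int c + 1 / (q * of_int a) = 0 \<longleftrightarrow> q * of_int (a * c) = -1"
    by (simp add: field_simps) linarith
  then show ?thesis by (simp add: loops_def is_path_two cfull_two)
qed (simp add: loops_def is_path_two)

lemma weight_two: "weight q [a, c] = q powr (1/2) * \<bar>of_int a\<bar>"
  by (simp add: weight_def plen_def)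

lemma pos_inverse_of_int_is_inverse_nat:
  fixes q :: real
  assumes "q > 0" "q * of_int n = 1"
  shows "\<exists>b::nat. b > 0 \<and> q = 1 / real b"
proof (intro exI conjI)
  have "0 < q * of_int n" using assms(2) by simp
  then have "of_int n > (0::real)"
    using assms(1) zero_less_mult_pos by blast
  then show "nat n > 0" by simp
  show "q = 1 / real (nat n)"
    using assms \<open>nat n > 0\<close> by (simp add: eq_divide_eq)
qed

lemma loop_of_length_one_iff:
  fixes q :: real
  assumes "q > 0"
  shows "(\<exists>m \<in> loops q. plen m = 1) \<longleftrightarrow> (\<exists>b::nat. b > 0 \<and> q = 1 / real b)"
proof
  assume "\<exists>m \<in> loops q. plen m = 1"
  then obtain m where "m \<in> loops q" "plen m = 1" by blast
  then obtain a c where "[a, c] \<in> loops q"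
    using plen_eq_1_iff[of m] by blast
  then have "q * of_int (- (a * c)) = 1"
    using assms by (simp add: in_loops_two_iff)
  with assms show "\<exists>b::nat. b > 0 \<and> q = 1 / real b"
    by (rule pos_inverse_of_int_is_inverse_nat)
next
  assume "\<exists>b::nat. b > 0 \<and> q = 1 / real b"
  then obtain b :: nat where "b > 0" "q = 1 / real b" by blast
  then have "[1, - int b] \<in> loops q"
    by (simp add: in_loops_two_iff)
  then show "\<exists>m \<in> loops q. plen m = 1"
    using plen_eq_1_iff[of "[1, - int b]"] by blast
qed

lemma weight_unique_loops:
  assumes "weight_unique q" "m \<in> loops q" "n \<in> loops q"
  shows "weight q m = weight q n"
proof -
  from assms(2,3) have "is_path q m \<and> is_path q n \<and> cfull q m = cfull q n"
    by (simp add: loops_def)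
  with assms(1) show ?thesis
    unfolding weight_unique_def by blast
qed

lemma not_weight_unique_inverse_nat:
  fixes b :: nat
  assumes "b > 1"
  shows "\<not> weight_unique (1 / real b)"
proof
  let ?q = "1 / real b"
  assume "weight_unique ?q"
  moreover have "[1, - int b] \<in> loops ?q" "[int b, -1] \<in> loops ?q"
    using assms by (simp_all add: in_loops_two_iff)
  ultimately have "weight ?q [1, - int b] = weight ?q [int b, -1]"
    by (rule weight_unique_loops)
  then have "?q powr (1/2) * 1 = ?q powr (1/2) * real b"
    by (simp add: weight_two)
  moreover have "?q powr (1/2) \<noteq> 0"
    using assms by simp
  ultimately have "real b = 1"
    by (metis mult_left_cancel)
  with assms show False by simp
qed

theorem corollary4:
  fixes q :: real
  assumes "q > 0"
  shows "((\<exists>m \<in> loops q. plen m = 1) \<longleftrightarrow> (\<exists>b::nat. b > 0 \<and> q = 1 / real b))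
         \<and> ((\<exists>b::nat. b > 0 \<and> q = 1 / real b) \<and> q \<noteq> 1 \<longrightarrow> \<not> weight_unique q)"
proof (intro conjI impI)
  show "(\<exists>m \<in> loops q. plen m = 1) \<longleftrightarrow> (\<exists>b::nat. b > 0 \<and> q = 1 / real b)"
    using assms by (rule loop_of_length_one_iff)
next
  assume "(\<exists>b::nat. b > 0 \<and> q = 1 / real b) \<and> q \<noteq> 1"
  then obtain b :: nat where "b > 0" "q = 1 / real b" "q \<noteq> 1"
    by blast
  then have "b > 1"
    by (cases "b = 1") simp_all
  with \<open>q = 1 / real b\<close> show "\<not> weight_unique q"
    using not_weight_unique_inverse_nat by blast
qed

end
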